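(* Let $\tau$ be a veering triangulation of $M$ with flow graph $\Phi$, and let $i_*:\mathbb{Z}[H_1(\Phi)]\to\mathbb{Z}[G]$ be induced by the inclusion $i:\Phi\to M$. Then $$V_\tau=i_*(P_\Phi)=1+\sum_{C}(-1)^{|C|}\,i_*([C]),$$ where the sum is over nonempty collections $C$ of pairwise vertex-disjoint simple directed cycles of $\Phi$.
   Context: $\tau$ is a veering triangulation of $M$ (taut ideal triangulation with cooriented faces, each tetrahedron having two bottom and two top faces, a bottom edge, a top edge and four side edges, angle sum $2\pi$ around edges, with a consistent right/left veer on edges modelled on a thickened rhombus whose side edges of positive slope are right-veering and of negative slope left-veering). $G=H_1(M;\mathbb{Z})/\mathrm{torsion}$ (multiplicative), $\hat M$ the cover with deck group $G$, $\tilde\tau$ the lift of $\tau$, $E$ the edge set. Veering polynomial: choosing a lift of each edge, let $L:\mathbb{Z}[G]^E\to\mathbb{Z}[G]^E$ send each edge $\mathbf b$ to $\mathbf b-(\mathbf t+\mathbf s_1+\mathbf s_2)$, where in the lifted tetrahedron having (the chosen lift of) $\mathbf b$ as its bottom edge, $\mathbf t$ is its top edge and $\mathbf s_1,\mathbf s_2$ its side edges of veer opposite to $\mathbf t$ (each written as a $G$-translate of a chosen lift); $V_\tau=\det L$. Flow graph $\Phi$: one vertex per edge of $\tau$; for each tetrahedron, directed edges from its bottom edge to its top edge and to the two side edges of veer opposite to the top edge; embedded in $M$ with vertices in the interiors of the corresponding edges, the edge to the top edge through the tetrahedron and the edges to side edges in the bottom faces. Perron polynomial $P_\Phi=\det(I-A)=1+\sum_C(-1)^{|C|}[C]\in\mathbb{Z}[H_1(\Phi)]$,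 $A$ the adjacency matrix. *)

theory Defs
  imports "HOL-Analysis.Analysis" "HOL-Library.Poly_Mapping"
begin

text \<open>Combinatorial encoding of a veering triangulation together with chosen lifts.
  'e : edges of tau, 't : tetrahedra, 'g : the deck group G (written additively).
  bedge t, tedge t : bottom / top edge of tetrahedron t; side t k (k < 4) : its four side edges;
  veer e : True iff e is right-veering.
  Lifts: in the lifted tetrahedron whose bottom edge is the chosen lift of bedge t, the top edge
  is the translate by htop t of the chosen lift of tedge t, and the side edge k is the
  translate by hside t k of the chosen lift of side t k.\<close>

text \<open>Group ring Z[G]: finitely supported functions G -> int with convolution product.
  The group element g is the basis element grp_elt g.\<close>
definition grp_elt :: "'g::ab_group_add \<Rightarrow> ('g \<Rightarrow>\<^sub>0 int)" where
  "grp_elt g = Poly_Mapping.single g 1"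

text \<open>Combinatorial part of the veering condition used in the statement.\<close>
definition veering_data ::
  "('t::finite \<Rightarrow> 'e::finite) \<Rightarrow> ('t \<Rightarrow> 'e) \<Rightarrow> ('t \<Rightarrow> nat \<Rightarrow> 'e) \<Rightarrow> ('e \<Rightarrow> bool) \<Rightarrow> bool" where
  "veering_data bedge tedge side veer \<longleftrightarrow>
     bij bedge \<and> bij tedge \<and>
     (\<forall>t. veer (side t 0) \<and> veer (side t 2) \<and> \<not> veer (side t 1) \<and> \<not> veer (side t 3))"

definition opp_sides :: "('t \<Rightarrow> 'e) \<Rightarrow> ('t \<Rightarrow> nat \<Rightarrow> 'e) \<Rightarrow> ('e \<Rightarrow> bool) \<Rightarrow> 't \<Rightarrow> nat set" where
  "opp_sides tedge side veer t = {k. k < 4 \<and> veer (side t k) \<noteq> veer (tedge t)}"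

text \<open>The matrix of L (column b is the image of the basis vector b) and V_tau = det L.\<close>
definition veering_matrix ::
  "('t::finite \<Rightarrow> 'e::finite) \<Rightarrow> ('t \<Rightarrow> 'e) \<Rightarrow> ('t \<Rightarrow> nat \<Rightarrow> 'e) \<Rightarrow> ('e \<Rightarrow> bool)
   \<Rightarrow> ('t \<Rightarrow> 'g::ab_group_add) \<Rightarrow> ('t \<Rightarrow> nat \<Rightarrow> 'g) \<Rightarrow> ('g \<Rightarrow>\<^sub>0 int)^'e^'e" where
  "veering_matrix bedge tedge side veer htop hside =
     (\<chi> u b. let t = inv bedge b in
        (if u = b then 1 else 0)
        - (if u = tedge t then grp_elt (htop t) else 0)
        - (\<Sum>k\<in>opp_sides tedge side veer t. if u = side t k then grp_elt (hside t k) else 0))"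

definition veering_poly ::
  "('t::finite \<Rightarrow> 'e::finite) \<Rightarrow> ('t \<Rightarrow> 'e) \<Rightarrow> ('t \<Rightarrow> nat \<Rightarrow> 'e) \<Rightarrow> ('e \<Rightarrow> bool)
   \<Rightarrow> ('t \<Rightarrow> 'g::ab_group_add) \<Rightarrow> ('t \<Rightarrow> nat \<Rightarrow> 'g) \<Rightarrow> ('g \<Rightarrow>\<^sub>0 int)" where
  "veering_poly bedge tedge side veer htop hside = det (veering_matrix bedge tedge side veer htop hside)"

text \<open>Flow graph Phi: vertices are the edges 'e; arcs are pairs (t,4) (bottom to tedge edge of t)
  and (t,k), k in opp_sides t (bottom edge to side edge k of t).\<close>
definition flow_arcs :: "('t \<Rightarrow> 'e) \<Rightarrow> ('t \<Rightarrow> nat \<Rightarrow> 'e) \<Rightarrow> ('e \<Rightarrow> bool) \<Rightarrow> ('t \<times> nat) set" where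
  "flow_arcs tedge side veer = {(t, k). k = 4 \<or> k \<in> opp_sides tedge side veer t}"

definition arc_src :: "('t \<Rightarrow> 'e) \<Rightarrow> 't \<times> nat \<Rightarrow> 'e" where
  "arc_src bedge a = bedge (fst a)"

definition arc_tgt :: "('t \<Rightarrow> 'e) \<Rightarrow> ('t \<Rightarrow> nat \<Rightarrow> 'e) \<Rightarrow> 't \<times> nat \<Rightarrow> 'e" where
  "arc_tgt tedge side a = (if snd a = 4 then tedge (fst a) else side (fst a) (snd a))"

text \<open>i_* of an arc, relative to the chosen lifts of its endpoints: the deck translation
  carrying the chosen lift of the target to the endpoint of the lift of the arc starting at
  the chosen lift of the source. For a closed cycle, i_*([cycle]) is the sum of these.\<close>
definition arc_label :: "('t \<Rightarrow> 'g) \<Rightarrow> ('t \<Rightarrow> nat \<Rightarrow> 'g) \<Rightarrow> 't \<times> nat \<Rightarrow> 'g" where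
  "arc_label htop hside a = (if snd a = 4 then htop (fst a) else hside (fst a) (snd a))"

text \<open>Simple directed cycles of Phi, as sets of arcs (i.e. up to cyclic rotation).\<close>
definition simple_cycle ::
  "('t \<Rightarrow> 'e) \<Rightarrow> ('t \<Rightarrow> 'e) \<Rightarrow> ('t \<Rightarrow> nat \<Rightarrow> 'e) \<Rightarrow> ('e \<Rightarrow> bool) \<Rightarrow> ('t \<times> nat) set \<Rightarrow> bool" where
  "simple_cycle bedge tedge side veer S \<longleftrightarrow>
     (\<exists>as. as \<noteq> [] \<and> set as = S \<and> set as \<subseteq> flow_arcs tedge side veer \<and>
        distinct (map (arc_src bedge) as) \<and>
        (\<forall>i < length as. arc_tgt tedge side (as ! i) = arc_src bedge (as ! ((i + 1) mod length as))))"

definition cycle_collections ::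
  "('t \<Rightarrow> 'e) \<Rightarrow> ('t \<Rightarrow> 'e) \<Rightarrow> ('t \<Rightarrow> nat \<Rightarrow> 'e) \<Rightarrow> ('e \<Rightarrow> bool) \<Rightarrow> ('t \<times> nat) set set set" where
  "cycle_collections bedge tedge side veer =
     {C. C \<noteq> {} \<and> (\<forall>S\<in>C. simple_cycle bedge tedge side veer S) \<and>
         (\<forall>S1\<in>C. \<forall>S2\<in>C. S1 \<noteq> S2 \<longrightarrow> arc_src bedge ` S1 \<inter> arc_src bedge ` S2 = {})}"

definition cycle_class ::
  "('t \<Rightarrow> 'g::ab_group_add) \<Rightarrow> ('t \<Rightarrow> nat \<Rightarrow> 'g) \<Rightarrow> ('t \<times> nat) set set \<Rightarrow> ('g \<Rightarrow>\<^sub>0 int)" where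
  "cycle_class htop hside C = grp_elt (\<Sum>S\<in>C. \<Sum>a\<in>S. arc_label htop hside a)"

definition flow_adj ::
  "('t::finite \<Rightarrow> 'e::finite) \<Rightarrow> ('t \<Rightarrow> 'e) \<Rightarrow> ('t \<Rightarrow> nat \<Rightarrow> 'e) \<Rightarrow> ('e \<Rightarrow> bool)
   \<Rightarrow> ('t \<Rightarrow> 'g::ab_group_add) \<Rightarrow> ('t \<Rightarrow> nat \<Rightarrow> 'g) \<Rightarrow> ('g \<Rightarrow>\<^sub>0 int)^'e^'e" where
  "flow_adj bedge tedge side veer htop hside =
     (\<chi> u v. \<Sum>a\<in>{a \<in> flow_arcs tedge side veer. arc_src bedge a = u \<and> arc_tgt tedge side a = v}.
                grp_elt (arc_label htop hside a))"

end

theory Submission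
  imports Defs "HOL-Combinatorics.Cycles" "HOL-Combinatorics.Orbits"
begin

text \<open>Expanding \<open>det (I - A)\<close> over permutations \<open>p\<close> and multiplying out the entries, each
  term picks, for every vertex \<open>v\<close>, either the diagonal \<open>1\<close> (then \<open>p v = v\<close>) or an arc from
  \<open>v\<close> to \<open>p v\<close>. The chosen arcs form a linear subgraph inducing \<open>p\<close>, and the term is
  \<open>sign p \<cdot> (-1)^#arcs \<cdot> \<Prod> w\<close>. Following successor arcs splits a nonempty linear subgraph
  uniquely into vertex-disjoint simple cycles; as a cycle of length \<open>l\<close> has sign
  \<open>(-1)^(l-1)\<close>, the coefficient becomes \<open>(-1)^#cycles\<close>, while the empty subgraph gives \<open>1\<close>.

  For the veering triangulation only the bijectivity of \<open>bedge\<close> matters: every edge is the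
  bottom edge of exactly one tetrahedron, and the column of \<open>L\<close> at that edge lists exactly the
  arcs of the flow graph leaving it, so \<open>L\<close> is the transpose of \<open>I - i\<^sub>*(A)\<close>.\<close>

definition is_simple_cycle :: "('a \<Rightarrow> 'e) \<Rightarrow> ('a \<Rightarrow> 'e) \<Rightarrow> 'a set \<Rightarrow> 'a set \<Rightarrow> bool" where
  "is_simple_cycle src tgt Ar S \<longleftrightarrow>
     (\<exists>as. as \<noteq> [] \<and> set as = S \<and> set as \<subseteq> Ar \<and> distinct (map src as) \<and>
        (\<forall>i < length as. tgt (as ! i) = src (as ! ((i + 1) mod length as))))"

definition vertex_disjoint :: "('a \<Rightarrow> 'e) \<Rightarrow> 'a set set \<Rightarrow> bool" where
  "vertex_disjoint src C \<longleftrightarrow> (\<forall>S1\<in>C. \<forall>S2\<in>C. S1 \<noteq> S2 \<longrightarrow> src ` S1 \<inter> src ` S2 = {})"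

definition cycle_families :: "('a \<Rightarrow> 'e) \<Rightarrow> ('a \<Rightarrow> 'e) \<Rightarrow> 'a set \<Rightarrow> 'a set set set" where
  "cycle_families src tgt Ar =
     {C. C \<noteq> {} \<and> (\<forall>S\<in>C. is_simple_cycle src tgt Ar S) \<and> vertex_disjoint src C}"

text \<open>Linear subgraphs: arc sets on which every vertex has in- and out-degree both zero or
  both one.\<close>
definition linear_subgraphs :: "('a \<Rightarrow> 'e) \<Rightarrow> ('a \<Rightarrow> 'e) \<Rightarrow> 'a set \<Rightarrow> 'a set set" where
  "linear_subgraphs src tgt Ar =
     {D. D \<subseteq> Ar \<and> inj_on src D \<and> inj_on tgt D \<and> src ` D = tgt ` D}"

definition subgraph_perm :: "('a \<Rightarrow> 'e) \<Rightarrow> ('a \<Rightarrow> 'e) \<Rightarrow> 'a set \<Rightarrow> 'e \<Rightarrow> 'e" where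
  "subgraph_perm src tgt D v = (if v \<in> src ` D then tgt (THE a. a \<in> D \<and> src a = v) else v)"

lemma the_arc_with_src: "inj_on src D \<Longrightarrow> a \<in> D \<Longrightarrow> (THE x. x \<in> D \<and> src x = src a) = a"
  by (rule the_equality) (auto dest: inj_onD)

lemma subgraph_perm_src: "inj_on src D \<Longrightarrow> a \<in> D \<Longrightarrow> subgraph_perm src tgt D (src a) = tgt a"
  unfolding subgraph_perm_def using the_arc_with_src by fastforce

lemma subgraph_perm_outside: "v \<notin> src ` D \<Longrightarrow> subgraph_perm src tgt D v = v"
  unfolding subgraph_perm_def by simp

lemma subgraph_perm_permutes:
  assumes "D \<in> linear_subgraphs src tgt Ar"
  shows "subgraph_perm src tgt D permutes src ` D"
proof (rule bij_imp_permutes)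
  have isrc: "inj_on src D" and itgt: "inj_on tgt D" and eq: "src ` D = tgt ` D"
    using assms by (auto simp: linear_subgraphs_def)
  have "subgraph_perm src tgt D ` src ` D = tgt ` D"
    unfolding image_image by (rule image_cong) (simp_all add: subgraph_perm_src[OF isrc])
  moreover have "inj_on (subgraph_perm src tgt D) (src ` D)"
  proof (rule inj_onI)
    fix u v assume "u \<in> src ` D" "v \<in> src ` D" "subgraph_perm src tgt D u = subgraph_perm src tgt D v"
    then obtain a b where "a \<in> D" "b \<in> D" "u = src a" "v = src b" "tgt a = tgt b"
      by (auto simp: subgraph_perm_src[OF isrc])
    then show "u = v" using inj_onD[OF itgt] by auto
  qed
  ultimately show "bij_betw (subgraph_perm src tgt D) (src ` D) (src ` D)"
    using eq by (simp add: bij_betw_def)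
qed (rule subgraph_perm_outside)

lemma permutation_subgraph_perm:
  "D \<in> linear_subgraphs src tgt Ar \<Longrightarrow> finite D \<Longrightarrow> permutation (subgraph_perm src tgt D)"
  using subgraph_perm_permutes permutes_imp_permutation by blast

lemma sign_cycle_of_list: "distinct cs \<Longrightarrow> sign (cycle_of_list cs) = (-1) ^ (length cs - 1)"
proof (induction cs rule: cycle_of_list.induct)
  case (1 i j cs)
  have "sign (cycle_of_list (i # j # cs))
      = sign (Transposition.transpose i j) * sign (cycle_of_list (j # cs))"
    by (simp add: sign_compose permutation_swap_id permutation_of_cycle)
  also have "\<dots> = (-1) ^ (length (i # j # cs) - 1)"
    using 1 by (simp add: sign_swap_id)
  finally show ?case .
qed (simp_all add: sign_id)

lemma simple_cycleE:
  assumes "is_simple_cycle src tgt Ar S"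
  obtains as where "as \<noteq> []" "set as = S" "set as \<subseteq> Ar" "distinct as" "distinct (map src as)"
    "map tgt as = rotate1 (map src as)"
proof -
  obtain as where as: "as \<noteq> []" "set as = S" "set as \<subseteq> Ar" "distinct (map src as)"
    "\<forall>i < length as. tgt (as ! i) = src (as ! ((i + 1) mod length as))"
    using assms unfolding is_simple_cycle_def by blast
  have "map tgt as = rotate1 (map src as)"
    by (rule nth_equalityI) (use as in \<open>auto simp: nth_rotate1\<close>)
  with as show thesis using that distinct_map by blast
qed

lemma simple_cycle_linear_subgraph:
  assumes "is_simple_cycle src tgt Ar S"
  shows "S \<in> linear_subgraphs src tgt Ar"
proof -
  obtain as where as: "set as = S" "set as \<subseteq> Ar" "distinct (map src as)"
    "map tgt as = rotate1 (map src as)"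
    using simple_cycleE[OF assms] by metis
  then have "distinct (map tgt as)" "tgt ` S = src ` S"
    by (simp, metis set_map set_rotate1)
  with as show ?thesis
    unfolding linear_subgraphs_def distinct_map by auto
qed

lemma simple_cycle_finite: "is_simple_cycle src tgt Ar S \<Longrightarrow> finite S"
  and simple_cycle_nonempty: "is_simple_cycle src tgt Ar S \<Longrightarrow> S \<noteq> {}"
  by (auto simp: is_simple_cycle_def)

lemma sign_subgraph_perm_simple_cycle:
  assumes "is_simple_cycle src tgt Ar S"
  shows "sign (subgraph_perm src tgt S) = (-1) ^ (card S - 1)"
proof -
  obtain as where as: "as \<noteq> []" "set as = S" "distinct as" "distinct (map src as)"
    "map tgt as = rotate1 (map src as)"
    using simple_cycleE[OF assms] by metis
  have isrc: "inj_on src S" using as by (auto simp: distinct_map)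
  have "subgraph_perm src tgt S = cycle_of_list (map src as)"
  proof
    fix v
    show "subgraph_perm src tgt S v = cycle_of_list (map src as) v"
    proof (cases "v \<in> src ` S")
      case True
      then obtain i where i: "i < length as" "v = src (as ! i)"
        using as by (auto simp: in_set_conv_nth)
      have "subgraph_perm src tgt S v = map tgt as ! i"
        using i as(2) subgraph_perm_src[OF isrc, of "as ! i" tgt] by auto
      also have "\<dots> = rotate1 (map src as) ! i"
        using as(5) by (rule arg_cong)
      also have "\<dots> = map (cycle_of_list (map src as)) (map src as) ! i"
        using as cyclic_rotation[of "map src as" 1] by simp
      finally show ?thesis using i by simp
    next
      case False
      then show ?thesis
        using as subgraph_perm_outside[OF False] id_outside_supp[of v "map src as"] by auto
    qed
  qed
  then show ?thesis
    using sign_cycle_of_list[OF as(4)] as distinct_card by fastforce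
qed

lemma linear_subgraph_Union:
  assumes lin: "\<And>S. S \<in> C \<Longrightarrow> S \<in> linear_subgraphs src tgt Ar" and disj: "vertex_disjoint src C"
  shows "\<Union>C \<in> linear_subgraphs src tgt Ar"
proof -
  have linS: "S \<subseteq> Ar" "inj_on src S" "inj_on tgt S" "tgt ` S = src ` S" if "S \<in> C" for S
    using lin[OF that] by (auto simp: linear_subgraphs_def)
  have inj: "inj_on g (\<Union>C)"
    if g: "\<And>S. S \<in> C \<Longrightarrow> inj_on g S" "\<And>S. S \<in> C \<Longrightarrow> g ` S = src ` S" for g
  proof (rule inj_onI)
    fix a b assume "a \<in> \<Union>C" "b \<in> \<Union>C" and ab: "g a = g b"
    then obtain S1 S2 where S: "S1 \<in> C" "S2 \<in> C" "a \<in> S1" "b \<in> S2" by blast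
    have "g a \<in> src ` S1 \<inter> src ` S2"
      using g(2)[OF S(1)] g(2)[OF S(2)] S(3,4) ab by (metis IntI imageI)
    then have "S1 = S2" using disj S(1,2) unfolding vertex_disjoint_def by blast
    then show "a = b" using inj_onD[OF g(1)[OF S(1)] ab] S by simp
  qed
  have "inj_on src (\<Union>C)" by (rule inj) (simp_all add: linS)
  moreover have "inj_on tgt (\<Union>C)" by (rule inj) (simp_all add: linS)
  moreover have "tgt ` \<Union>C = src ` \<Union>C" by (simp add: image_Union linS)
  ultimately show ?thesis using linS(1) by (auto simp: linear_subgraphs_def)
qed

lemma subgraph_perm_Un:
  assumes "inj_on src (D1 \<union> D2)" "src ` D1 \<inter> src ` D2 = {}" "tgt ` D2 = src ` D2"
  shows "subgraph_perm src tgt (D1 \<union> D2) = subgraph_perm src tgt D1 \<circ> subgraph_perm src tgt D2"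
proof
  fix v
  have i1: "inj_on src D1" and i2: "inj_on src D2" using assms(1) inj_on_subset by blast+
  consider a where "a \<in> D2" "v = src a" | a where "a \<in> D1" "v = src a" | "v \<notin> src ` (D1 \<union> D2)"
    by blast
  then show "subgraph_perm src tgt (D1 \<union> D2) v = (subgraph_perm src tgt D1 \<circ> subgraph_perm src tgt D2) v"
  proof cases
    case 1
    then have "tgt a \<notin> src ` D1" using assms(2,3) by blast
    then show ?thesis using 1 subgraph_perm_src[OF assms(1)] subgraph_perm_src[OF i2]
      subgraph_perm_outside[of "tgt a" src D1] by simp
  next
    case 2
    then have "v \<notin> src ` D2" using assms(2) by blast
    then show ?thesis using 2 subgraph_perm_src[OF assms(1)] subgraph_perm_src[OF i1]
      subgraph_perm_outside[of v src D2] by simp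
  qed (simp add: subgraph_perm_def image_Un)
qed

text \<open>Each cycle of length \<open>l\<close> contributes \<open>(-1)^(l-1) \<cdot> (-1)^l = -1\<close>.\<close>
lemma sign_subgraph_perm_Union:
  assumes "finite C" "\<And>S. S \<in> C \<Longrightarrow> is_simple_cycle src tgt Ar S" "vertex_disjoint src C"
  shows "sign (subgraph_perm src tgt (\<Union>C)) * (-1) ^ card (\<Union>C) = (-1) ^ card C"
  using assms
proof (induction C rule: finite_induct)
  case empty
  have "subgraph_perm src tgt {} = id" by (auto simp: subgraph_perm_def)
  then show ?case by simp
next
  case (insert S C)
  have S: "is_simple_cycle src tgt Ar S" using insert.prems(1) by blast
  have cycC: "\<And>S'. S' \<in> C \<Longrightarrow> is_simple_cycle src tgt Ar S'" using insert.prems(1) by blast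
  have disjC: "vertex_disjoint src C" using insert.prems(2) unfolding vertex_disjoint_def by blast
  have disjS: "src ` S \<inter> src ` S' = {}" if "S' \<in> C" for S'
    using insert.prems(2) insert.hyps(2) that unfolding vertex_disjoint_def by (metis insertCI)
  then have disj: "src ` S \<inter> src ` \<Union>C = {}" by (auto simp: image_Union)
  have linS: "S \<in> linear_subgraphs src tgt Ar" by (rule simple_cycle_linear_subgraph[OF S])
  have linU: "\<Union>(insert S C) \<in> linear_subgraphs src tgt Ar"
    by (rule linear_subgraph_Union[OF _ insert.prems(2)])
      (use insert.prems(1) simple_cycle_linear_subgraph in blast)
  have linC: "\<Union>C \<in> linear_subgraphs src tgt Ar"
    by (rule linear_subgraph_Union[OF _ disjC]) (use cycC simple_cycle_linear_subgraph in blast)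
  have finS: "finite S" by (rule simple_cycle_finite[OF S])
  have finC: "finite (\<Union>C)" using insert.hyps(1) cycC simple_cycle_finite by blast
  have perm: "subgraph_perm src tgt (\<Union>(insert S C))
      = subgraph_perm src tgt S \<circ> subgraph_perm src tgt (\<Union>C)"
    unfolding Union_insert using linU linC disj
    by (intro subgraph_perm_Un) (auto simp: linear_subgraphs_def)
  have card: "card (\<Union>(insert S C)) = card S + card (\<Union>C)"
    using card_Un_disjoint[OF finS finC] disj by auto
  obtain m where m: "card S = Suc m"
    using finS simple_cycle_nonempty[OF S] by (metis card_0_eq not0_implies_Suc)
  have sign: "sign (subgraph_perm src tgt (\<Union>(insert S C)))
      = (-1) ^ m * sign (subgraph_perm src tgt (\<Union>C))"
    unfolding perm sign_compose[OF permutation_subgraph_perm[OF linS finS]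
        permutation_subgraph_perm[OF linC finC]]
    using sign_subgraph_perm_simple_cycle[OF S] m by simp
  have "sign (subgraph_perm src tgt (\<Union>(insert S C))) * (-1) ^ card (\<Union>(insert S C))
      = - (sign (subgraph_perm src tgt (\<Union>C)) * (-1) ^ card (\<Union>C))"
    unfolding sign card m by (simp add: power_add)
  also have "\<dots> = (-1) ^ card (insert S C)"
    using insert.IH[OF cycC disjC] insert.hyps by simp
  finally show ?case .
qed

text \<open>The successor of an arc in a linear subgraph, extended by the identity off \<open>D\<close> so that
  it is a permutation of \<open>D\<close> and the library theory of orbits applies.\<close>
definition next_arc :: "('a \<Rightarrow> 'e) \<Rightarrow> ('a \<Rightarrow> 'e) \<Rightarrow> 'a set \<Rightarrow> 'a \<Rightarrow> 'a" where
  "next_arc src tgt D b = (if b \<in> D then THE a. a \<in> D \<and> src a = tgt b else b)"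

definition subgraph_cycles :: "('a \<Rightarrow> 'e) \<Rightarrow> ('a \<Rightarrow> 'e) \<Rightarrow> 'a set \<Rightarrow> 'a set set" where
  "subgraph_cycles src tgt D = orbit (next_arc src tgt D) ` D"

context
  fixes src tgt :: "'a \<Rightarrow> 'e" and Ar D :: "'a set"
  assumes lin: "D \<in> linear_subgraphs src tgt Ar" and fin: "finite D"
begin

lemma next_arc_eqI: "b \<in> D \<Longrightarrow> a \<in> D \<Longrightarrow> src a = tgt b \<Longrightarrow> next_arc src tgt D b = a"
  using lin the_arc_with_src[of src D a] by (auto simp: next_arc_def linear_subgraphs_def)

lemma next_arc_in: "b \<in> D \<Longrightarrow> next_arc src tgt D b \<in> D"
  and src_next_arc: "b \<in> D \<Longrightarrow> src (next_arc src tgt D b) = tgt b"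
proof -
  assume b: "b \<in> D"
  then obtain a where "a \<in> D" "src a = tgt b"
    using lin by (force simp: linear_subgraphs_def)
  with next_arc_eqI[OF b] show "next_arc src tgt D b \<in> D" "src (next_arc src tgt D b) = tgt b"
    by simp_all
qed

lemma next_arc_permutes: "next_arc src tgt D permutes D"
proof (rule bij_imp_permutes)
  have "inj_on (next_arc src tgt D) D"
  proof (rule inj_onI)
    fix b c assume "b \<in> D" "c \<in> D" "next_arc src tgt D b = next_arc src tgt D c"
    then have "tgt b = tgt c" using src_next_arc by metis
    then show "b = c" using lin \<open>b \<in> D\<close> \<open>c \<in> D\<close> by (auto simp: linear_subgraphs_def dest: inj_onD)
  qed
  moreover have "D \<subseteq> next_arc src tgt D ` D"
  proof
    fix a assume "a \<in> D"
    then obtain b where "b \<in> D" "tgt b = src a"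
      using lin by (force simp: linear_subgraphs_def)
    then show "a \<in> next_arc src tgt D ` D" using next_arc_eqI \<open>a \<in> D\<close> by force
  qed
  ultimately show "bij_betw (next_arc src tgt D) D D"
    using next_arc_in by (auto simp: bij_betw_def)
qed (simp add: next_arc_def)

lemma permutation_next_arc: "permutation (next_arc src tgt D)"
  using permutes_imp_permutation[OF fin next_arc_permutes] .

lemma simple_cycle_orbit_next_arc:
  assumes b: "b \<in> D"
  shows "is_simple_cycle src tgt Ar (orbit (next_arc src tgt D) b)"
proof -
  let ?N = "next_arc src tgt D"
  define l where "l = funpow_dist1 ?N b b"
  define as where "as = map (\<lambda>n. (?N ^^ n) b) [0..<l]"
  have self: "b \<in> orbit ?N b" by (rule permutation_self_in_orbit[OF permutation_next_arc])
  have set_as: "set as = orbit ?N b"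
    unfolding as_def set_map set_upt l_def by (rule orbit_conv_funpow_dist1[OF self, symmetric])
  have "distinct as"
    unfolding as_def distinct_map set_upt l_def
    using inj_on_funpow_dist1[OF self] by (simp only: distinct_upt simp_thms)
  moreover have sub: "set as \<subseteq> D"
    using set_as permutes_orbit_subset[OF next_arc_permutes b] by simp
  ultimately have "distinct (map src as)"
    using lin by (auto simp: distinct_map linear_subgraphs_def intro: inj_on_subset)
  moreover have "tgt (as ! i) = src (as ! ((i + 1) mod length as))" if i: "i < length as" for i
  proof -
    have "as ! ((i + 1) mod l) = (?N ^^ Suc i) b"
    proof (cases "Suc i < l")
      case False
      then have "Suc i = l" using i by (simp add: as_def)
      moreover have "(?N ^^ l) b = b" using funpow_dist1_prop[OF self] by (simp add: l_def)
      ultimately show ?thesis by (simp add: as_def)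
    qed (simp add: as_def)
    moreover have "as ! i \<in> D" using i sub nth_mem by blast
    ultimately show ?thesis
      using i src_next_arc[of "as ! i"] by (simp add: as_def)
  qed
  moreover have "as \<noteq> []" by (simp add: as_def l_def)
  ultimately show ?thesis
    unfolding is_simple_cycle_def using set_as sub lin
    by (auto simp: linear_subgraphs_def intro!: exI[of _ as])
qed

lemma orbit_next_arc_simple_cycle:
  assumes S: "is_simple_cycle src tgt Ar' S" and "S \<subseteq> D" and "a \<in> S"
  shows "orbit (next_arc src tgt D) a = S"
proof -
  let ?N = "next_arc src tgt D"
  obtain as where as: "as \<noteq> []" "set as = S"
    "\<And>i. i < length as \<Longrightarrow> tgt (as ! i) = src (as ! ((i + 1) mod length as))"
    using S unfolding is_simple_cycle_def by blast
  define l where "l = length as"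
  have l: "0 < l" using as(1) by (simp add: l_def)
  have inD: "as ! j \<in> D" if "j < l" for j
    using that \<open>S \<subseteq> D\<close> as(2) nth_mem by (auto simp: l_def)
  obtain i0 where i0: "i0 < l" "a = as ! i0"
    using \<open>a \<in> S\<close> as(2) by (auto simp: in_set_conv_nth l_def)
  have pow: "(?N ^^ n) a = as ! ((i0 + n) mod l)" for n
  proof (induction n)
    case (Suc n)
    have "?N (as ! ((i0 + n) mod l)) = as ! (((i0 + n) mod l + 1) mod l)"
      using l inD as(3) by (intro next_arc_eqI) (simp_all add: l_def)
    then show ?case using Suc by (simp add: mod_Suc_eq)
  qed (simp add: i0)
  have "orbit ?N a = {(?N ^^ n) a | n. True}"
    by (rule orbit_altdef_permutation[OF permutation_next_arc])
  also have "\<dots> = {as ! j | j. j < l}"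
  proof (intro set_eqI iffI)
    fix x assume "x \<in> {as ! j | j. j < l}"
    then obtain j where "j < l" "x = as ! j" by blast
    then have "x = (?N ^^ (l - i0 + j)) a"
      using i0(1) pow by (simp add: add.commute)
    then show "x \<in> {(?N ^^ n) a | n. True}" by blast
  qed (use pow l in auto)
  also have "\<dots> = S" using as(2) by (auto simp: l_def in_set_conv_nth)
  finally show ?thesis .
qed

lemma Union_subgraph_cycles: "\<Union>(subgraph_cycles src tgt D) = D"
  unfolding subgraph_cycles_def
  using permutes_orbit_subset[OF next_arc_permutes] permutation_self_in_orbit[OF permutation_next_arc]
  by blast

lemma subgraph_cycles_in_cycle_families:
  assumes "D \<noteq> {}"
  shows "subgraph_cycles src tgt D \<in> cycle_families src tgt Ar"
proof -
  let ?N = "next_arc src tgt D"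
  have "S1 = S2" if S: "S1 \<in> subgraph_cycles src tgt D" "S2 \<in> subgraph_cycles src tgt D"
    and x: "x \<in> src ` S1 \<inter> src ` S2" for S1 S2 x
  proof -
    obtain a1 a2 where a: "a1 \<in> S1" "a2 \<in> S2" "src a1 = src a2" using x by auto
    have "S1 \<subseteq> D" "S2 \<subseteq> D" using S Union_subgraph_cycles by blast+
    then have "a1 = a2" using a lin by (auto simp: linear_subgraphs_def dest: inj_onD)
    moreover have "cyclic_on ?N S1" "cyclic_on ?N S2"
      using S cyclic_on_orbit[OF next_arc_permutes fin] by (auto simp: subgraph_cycles_def)
    ultimately show ?thesis using a orbit_cyclic_eq3 by metis
  qed
  then show ?thesis
    using assms simple_cycle_orbit_next_arc
    by (auto simp: cycle_families_def vertex_disjoint_def subgraph_cycles_def)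
qed

end

lemma Union_cycle_family:
  assumes "C \<in> cycle_families src tgt Ar"
  shows "\<Union>C \<in> linear_subgraphs src tgt Ar"
proof (rule linear_subgraph_Union)
  show "\<And>S. S \<in> C \<Longrightarrow> S \<in> linear_subgraphs src tgt Ar"
    using assms by (auto simp: cycle_families_def intro: simple_cycle_linear_subgraph)
  show "vertex_disjoint src C" using assms by (simp add: cycle_families_def)
qed

lemma finite_cycle_family: "finite Ar \<Longrightarrow> C \<in> cycle_families src tgt Ar \<Longrightarrow> finite C"
  by (rule finite_subset[of C "Pow Ar"])
    (auto simp: cycle_families_def is_simple_cycle_def)

lemma subgraph_cycles_Union:
  assumes "finite Ar" and C: "C \<in> cycle_families src tgt Ar"
  shows "subgraph_cycles src tgt (\<Union>C) = C"
proof -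
  have cyc: "\<And>S. S \<in> C \<Longrightarrow> is_simple_cycle src tgt Ar S" using C by (simp add: cycle_families_def)
  have lin: "\<Union>C \<in> linear_subgraphs src tgt Ar" by (rule Union_cycle_family[OF C])
  then have "finite (\<Union>C)"
    using \<open>finite Ar\<close> by (auto simp: linear_subgraphs_def intro: finite_subset)
  then have orb: "orbit (next_arc src tgt (\<Union>C)) a = S" if "S \<in> C" "a \<in> S" for S a
    using orbit_next_arc_simple_cycle[OF lin _ cyc] that by blast
  show ?thesis
  proof
    show "subgraph_cycles src tgt (\<Union>C) \<subseteq> C"
      unfolding subgraph_cycles_def using orb by blast
    show "C \<subseteq> subgraph_cycles src tgt (\<Union>C)"
    proof
      fix S assume "S \<in> C"
      then obtain a where "a \<in> S" using cyc simple_cycle_nonempty by blast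
      then show "S \<in> subgraph_cycles src tgt (\<Union>C)"
        unfolding subgraph_cycles_def using orb \<open>S \<in> C\<close> by blast
    qed
  qed
qed

lemma sum_cycle_families_eq_sum_linear_subgraphs:
  fixes w :: "'a \<Rightarrow> 'r::comm_ring_1"
  assumes fin: "finite Ar"
  shows "(\<Sum>C\<in>cycle_families src tgt Ar. (-1) ^ card C * (\<Prod>S\<in>C. \<Prod>a\<in>S. w a))
       = (\<Sum>D\<in>linear_subgraphs src tgt Ar - {{}}.
            of_int (sign (subgraph_perm src tgt D)) * (-1) ^ card D * (\<Prod>a\<in>D. w a))"
proof (rule sum.reindex_bij_witness[of _ "subgraph_cycles src tgt" Union])
  fix C assume C: "C \<in> cycle_families src tgt Ar"
  then have cyc: "\<And>S. S \<in> C \<Longrightarrow> is_simple_cycle src tgt Ar S" and disj: "vertex_disjoint src C"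
    and "C \<noteq> {}"
    by (simp_all add: cycle_families_def)
  show "subgraph_cycles src tgt (\<Union>C) = C" by (rule subgraph_cycles_Union[OF fin C])
  have "\<Union>C \<noteq> {}" using \<open>C \<noteq> {}\<close> cyc simple_cycle_nonempty by blast
  then show "\<Union>C \<in> linear_subgraphs src tgt Ar - {{}}" using Union_cycle_family[OF C] by simp
  have "(\<Prod>a\<in>\<Union>C. w a) = (\<Prod>S\<in>C. \<Prod>a\<in>S. w a)"
    using disj simple_cycle_finite[OF cyc]
    by (subst prod.Union_disjoint) (auto simp: vertex_disjoint_def)
  moreover have "of_int (sign (subgraph_perm src tgt (\<Union>C))) * (-1) ^ card (\<Union>C) = (-1 :: 'r) ^ card C"
    using arg_cong[OF sign_subgraph_perm_Union[OF finite_cycle_family[OF fin C] cyc disj],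
        of "of_int :: int \<Rightarrow> 'r"] by simp
  ultimately show "of_int (sign (subgraph_perm src tgt (\<Union>C))) * (-1) ^ card (\<Union>C) * (\<Prod>a\<in>\<Union>C. w a)
      = (-1) ^ card C * (\<Prod>S\<in>C. \<Prod>a\<in>S. w a)" by simp
next
  fix D assume D: "D \<in> linear_subgraphs src tgt Ar - {{}}"
  then have lin: "D \<in> linear_subgraphs src tgt Ar" and "D \<noteq> {}" by simp_all
  moreover have "finite D" using lin fin by (auto simp: linear_subgraphs_def intro: finite_subset)
  ultimately show "\<Union>(subgraph_cycles src tgt D) = D"
    "subgraph_cycles src tgt D \<in> cycle_families src tgt Ar"
    by (simp_all add: Union_subgraph_cycles subgraph_cycles_in_cycle_families)
qed

definition arc_matrix ::
  "('a \<Rightarrow> 'e) \<Rightarrow> ('a \<Rightarrow> 'e) \<Rightarrow> 'a set \<Rightarrow> ('a \<Rightarrow> 'r::comm_ring_1) \<Rightarrow> 'r^'e^'e" where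
  "arc_matrix src tgt Ar w = (\<chi> u v. \<Sum>a\<in>{a \<in> Ar. src a = u \<and> tgt a = v}. w a)"

text \<open>Multiplying out entry \<open>(i, p i)\<close> of \<open>I - A\<close>, the term \<open>None\<close> stands for the
  identity entry and \<open>Some a\<close> for the term \<open>- w a\<close> of an arc \<open>a\<close> from \<open>i\<close> to \<open>p i\<close>.\<close>
definition entry_choices ::
  "('a \<Rightarrow> 'e) \<Rightarrow> ('a \<Rightarrow> 'e) \<Rightarrow> 'a set \<Rightarrow> ('e \<Rightarrow> 'e) \<Rightarrow> 'e \<Rightarrow> 'a option set" where
  "entry_choices src tgt Ar p i =
     (if p i = i then {None} else {}) \<union> Some ` {a \<in> Ar. src a = i \<and> tgt a = p i}"

definition choice_value :: "('a \<Rightarrow> 'r::comm_ring_1) \<Rightarrow> 'a option \<Rightarrow> 'r" where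
  "choice_value w x = (case x of None \<Rightarrow> 1 | Some a \<Rightarrow> - w a)"

definition chosen_arcs :: "('e \<Rightarrow> 'a option) \<Rightarrow> 'a set" where
  "chosen_arcs \<beta> = {a. \<exists>i. \<beta> i = Some a}"

definition arc_choice :: "('a \<Rightarrow> 'e) \<Rightarrow> 'a set \<Rightarrow> 'e \<Rightarrow> 'a option" where
  "arc_choice src D v = (if v \<in> src ` D then Some (THE a. a \<in> D \<and> src a = v) else None)"

lemma entry_one_minus_arc_matrix:
  assumes "finite Ar"
  shows "(mat 1 - arc_matrix src tgt Ar w) $ i $ p i
       = (\<Sum>x\<in>entry_choices src tgt Ar p i. choice_value w x)"
proof -
  let ?B = "{a \<in> Ar. src a = i \<and> tgt a = p i}"
  have "(\<Sum>x\<in>entry_choices src tgt Ar p i. choice_value w x)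
      = (\<Sum>x\<in>(if p i = i then {None} else {}). choice_value w x) + (\<Sum>x\<in>Some ` ?B. choice_value w x)"
    unfolding entry_choices_def by (rule sum.union_disjoint) (use assms in auto)
  also have "\<dots> = (if i = p i then 1 else 0) - (\<Sum>a\<in>?B. w a)"
    by (simp add: sum.reindex choice_value_def sum_negf)
  finally show ?thesis unfolding arc_matrix_def mat_def by simp
qed

lemma chosen_arcsI: "\<beta> i = Some a \<Longrightarrow> a \<in> chosen_arcs \<beta>"
  by (auto simp: chosen_arcs_def)

context
  fixes src tgt :: "'a \<Rightarrow> 'e::finite" and Ar :: "'a set"
    and p :: "'e \<Rightarrow> 'e" and \<beta> :: "'e \<Rightarrow> 'a option"
  assumes p: "p permutes UNIV" and \<beta>: "\<And>i. \<beta> i \<in> entry_choices src tgt Ar p i"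
begin

lemma chosen_arcD: "\<beta> i = Some a \<Longrightarrow> a \<in> Ar \<and> src a = i \<and> tgt a = p i"
  using \<beta>[of i] unfolding entry_choices_def by (auto split: if_splits)

lemma fixed_if_unchosen: "\<beta> i = None \<Longrightarrow> p i = i"
  using \<beta>[of i] unfolding entry_choices_def by (auto split: if_splits)

lemma chosen_arcsE:
  assumes "a \<in> chosen_arcs \<beta>"
  obtains "\<beta> (src a) = Some a" "a \<in> Ar" "tgt a = p (src a)"
  using assms chosen_arcD unfolding chosen_arcs_def by blast

lemma src_chosen_arcs: "src ` chosen_arcs \<beta> = {i. \<beta> i \<noteq> None}"
proof (intro set_eqI iffI)
  fix i assume "i \<in> {i. \<beta> i \<noteq> None}"
  then obtain a where "\<beta> i = Some a" by auto
  then show "i \<in> src ` chosen_arcs \<beta>" using chosen_arcsI[of \<beta>] chosen_arcD by (metis image_eqI)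
qed (auto elim: chosen_arcsE)

lemma inj_on_src_chosen_arcs: "inj_on src (chosen_arcs \<beta>)"
  by (rule inj_onI) (metis chosen_arcsE option.inject)

lemma chosen_arcs_linear_subgraph: "chosen_arcs \<beta> \<in> linear_subgraphs src tgt Ar"
proof -
  let ?F = "{i. \<beta> i \<noteq> None}"
  have "chosen_arcs \<beta> \<subseteq> Ar" by (auto elim: chosen_arcsE)
  moreover have "inj_on tgt (chosen_arcs \<beta>)"
  proof (rule inj_onI)
    fix a b assume "a \<in> chosen_arcs \<beta>" "b \<in> chosen_arcs \<beta>" "tgt a = tgt b"
    then show "a = b"
      using permutes_inj[OF p] by (metis chosen_arcsE injD option.inject)
  qed
  moreover have "tgt ` chosen_arcs \<beta> = p ` src ` chosen_arcs \<beta>"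
    unfolding image_image by (rule image_cong) (auto elim: chosen_arcsE)
  moreover have "p ` (- ?F) = (\<lambda>i. i) ` (- ?F)"
    by (rule image_cong) (simp_all add: fixed_if_unchosen)
  then have "p ` ?F = ?F"
    using bij_image_Compl_eq[OF permutes_bij[OF p], of "- ?F"] by simp
  ultimately show ?thesis
    using inj_on_src_chosen_arcs by (simp add: linear_subgraphs_def src_chosen_arcs)
qed

lemma arc_choice_chosen_arcs: "arc_choice src (chosen_arcs \<beta>) = \<beta>"
proof
  fix v
  show "arc_choice src (chosen_arcs \<beta>) v = \<beta> v"
  proof (cases "\<beta> v")
    case None
    then show ?thesis by (simp add: arc_choice_def src_chosen_arcs)
  next
    case (Some a)
    then have a: "a \<in> chosen_arcs \<beta>" and v: "v = src a"
      using chosen_arcsI[of \<beta>, OF Some] chosen_arcD[OF Some] by simp_all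
    show ?thesis
      unfolding arc_choice_def using a v Some the_arc_with_src[OF inj_on_src_chosen_arcs a] by simp
  qed
qed

lemma subgraph_perm_chosen_arcs: "subgraph_perm src tgt (chosen_arcs \<beta>) = p"
proof
  fix v
  show "subgraph_perm src tgt (chosen_arcs \<beta>) v = p v"
  proof (cases "\<beta> v")
    case None
    then have "v \<notin> src ` chosen_arcs \<beta>" by (simp add: src_chosen_arcs)
    then show ?thesis by (simp add: subgraph_perm_outside fixed_if_unchosen[OF None])
  next
    case (Some a)
    then have a: "a \<in> chosen_arcs \<beta>" and "src a = v" "tgt a = p v"
      using chosen_arcsI[of \<beta>, OF Some] chosen_arcD[OF Some] by simp_all
    then show ?thesis using subgraph_perm_src[OF inj_on_src_chosen_arcs a] by simp
  qed
qed

lemma prod_choice_value: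
  "(\<Prod>i\<in>UNIV. choice_value w (\<beta> i)) = (-1) ^ card (chosen_arcs \<beta>) * (\<Prod>a\<in>chosen_arcs \<beta>. w a)"
proof -
  have "(\<Prod>i\<in>UNIV. choice_value w (\<beta> i)) = (\<Prod>i\<in>src ` chosen_arcs \<beta>. choice_value w (\<beta> i))"
    unfolding src_chosen_arcs by (rule prod.mono_neutral_right) (auto simp: choice_value_def)
  also have "\<dots> = (\<Prod>a\<in>chosen_arcs \<beta>. choice_value w (\<beta> (src a)))"
    using prod.reindex[OF inj_on_src_chosen_arcs, of "\<lambda>i. choice_value w (\<beta> i)"]
    by (simp add: o_def)
  also have "\<dots> = (\<Prod>a\<in>chosen_arcs \<beta>. - w a)"
    by (rule prod.cong) (auto simp: choice_value_def elim: chosen_arcsE)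
  finally show ?thesis by (simp add: prod_uminus)
qed

end

lemma chosen_arcs_arc_choice:
  assumes "inj_on src D"
  shows "chosen_arcs (arc_choice src D) = D"
proof (intro set_eqI iffI)
  fix a assume "a \<in> chosen_arcs (arc_choice src D)"
  then obtain v where "arc_choice src D v = Some a" by (auto simp: chosen_arcs_def)
  then obtain b where "b \<in> D" "v = src b" "a = (THE x. x \<in> D \<and> src x = v)"
    by (auto simp: arc_choice_def split: if_splits)
  then show "a \<in> D" using the_arc_with_src[OF assms] by simp
next
  fix a assume "a \<in> D"
  then have "arc_choice src D (src a) = Some a"
    using the_arc_with_src[OF assms] by (simp add: arc_choice_def)
  then show "a \<in> chosen_arcs (arc_choice src D)" by (rule chosen_arcsI)
qed

lemma arc_choice_in_entry_choices:
  assumes "D \<in> linear_subgraphs src tgt Ar"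
  shows "arc_choice src D i \<in> entry_choices src tgt Ar (subgraph_perm src tgt D) i"
proof (cases "i \<in> src ` D")
  case True
  then obtain a where a: "a \<in> D" "i = src a" by auto
  have isrc: "inj_on src D" using assms by (simp add: linear_subgraphs_def)
  then have "arc_choice src D i = Some a" using a the_arc_with_src by (simp add: arc_choice_def)
  moreover have "a \<in> Ar" using a assms by (auto simp: linear_subgraphs_def)
  ultimately show ?thesis
    using a subgraph_perm_src[OF isrc a(1)] by (auto simp: entry_choices_def)
next
  case False
  then show ?thesis by (simp add: arc_choice_def entry_choices_def subgraph_perm_outside)
qed

text \<open>Each term of the expanded determinant is determined by its set of chosen arcs.\<close>
lemma sum_entry_choices_eq_sum_linear_subgraphs:
  fixes src tgt :: "'a \<Rightarrow> 'e::finite" and w :: "'a \<Rightarrow> 'r::comm_ring_1"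
  shows "(\<Sum>(p, \<beta>)\<in>(SIGMA p:{p. p permutes UNIV}. PiE UNIV (entry_choices src tgt Ar p)).
            of_int (sign p) * (\<Prod>i\<in>UNIV. choice_value w (\<beta> i)))
       = (\<Sum>D\<in>linear_subgraphs src tgt Ar.
            of_int (sign (subgraph_perm src tgt D)) * (-1) ^ card D * (\<Prod>a\<in>D. w a))"
proof (rule sum.reindex_bij_witness[of _ "\<lambda>D. (subgraph_perm src tgt D, arc_choice src D)"
      "\<lambda>x. chosen_arcs (snd x)"])
  fix x assume "x \<in> (SIGMA p:{p. p permutes UNIV}. PiE UNIV (entry_choices src tgt Ar p))"
  then obtain p \<beta> where x: "x = (p, \<beta>)" and p: "p permutes UNIV"
    and \<beta>: "\<And>i. \<beta> i \<in> entry_choices src tgt Ar p i"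
    by (auto simp: PiE_UNIV_domain)
  show "(subgraph_perm src tgt (chosen_arcs (snd x)), arc_choice src (chosen_arcs (snd x))) = x"
    using subgraph_perm_chosen_arcs[OF p \<beta>] arc_choice_chosen_arcs[OF p \<beta>] x by simp
  show "chosen_arcs (snd x) \<in> linear_subgraphs src tgt Ar"
    using chosen_arcs_linear_subgraph[OF p \<beta>] x by simp
  show "of_int (sign (subgraph_perm src tgt (chosen_arcs (snd x)))) * (-1) ^ card (chosen_arcs (snd x))
      * (\<Prod>a\<in>chosen_arcs (snd x). w a)
      = (case x of (p, \<beta>) \<Rightarrow> of_int (sign p) * (\<Prod>i\<in>UNIV. choice_value w (\<beta> i)))"
    using subgraph_perm_chosen_arcs[OF p \<beta>] prod_choice_value[OF p \<beta>, of w] x by simp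
next
  fix D assume D: "D \<in> linear_subgraphs src tgt Ar"
  then show "chosen_arcs (snd (subgraph_perm src tgt D, arc_choice src D)) = D"
    using chosen_arcs_arc_choice[of src D] by (simp add: linear_subgraphs_def)
  have "subgraph_perm src tgt D permutes UNIV"
    using subgraph_perm_permutes[OF D] by (rule permutes_subset) simp
  then show "(subgraph_perm src tgt D, arc_choice src D)
      \<in> (SIGMA p:{p. p permutes UNIV}. PiE UNIV (entry_choices src tgt Ar p))"
    using arc_choice_in_entry_choices[OF D] by (simp add: PiE_UNIV_domain)
qed

lemma det_one_minus_arc_matrix:
  fixes src tgt :: "'a \<Rightarrow> 'e::finite" and w :: "'a \<Rightarrow> 'r::comm_ring_1"
  assumes fin: "finite Ar"
  shows "det (mat 1 - arc_matrix src tgt Ar w)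
       = (\<Sum>D\<in>linear_subgraphs src tgt Ar.
            of_int (sign (subgraph_perm src tgt D)) * (-1) ^ card D * (\<Prod>a\<in>D. w a))"
proof -
  let ?P = "{p. p permutes (UNIV :: 'e set)}"
  let ?B = "\<lambda>p. PiE UNIV (entry_choices src tgt Ar p)"
  let ?term = "\<lambda>p \<beta>. of_int (sign p) * (\<Prod>i\<in>UNIV. choice_value w (\<beta> i))"
  have fin_choices: "finite (entry_choices src tgt Ar p i)" for p i
    using fin by (simp add: entry_choices_def)
  have "det (mat 1 - arc_matrix src tgt Ar w)
      = (\<Sum>p\<in>?P. of_int (sign p) * (\<Prod>i\<in>UNIV. \<Sum>x\<in>entry_choices src tgt Ar p i. choice_value w x))"
    unfolding det_def by (simp only: entry_one_minus_arc_matrix[OF fin])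
  also have "\<dots> = (\<Sum>p\<in>?P. \<Sum>\<beta>\<in>?B p. ?term p \<beta>)"
    by (simp only: prod_sum_PiE[OF finite fin_choices] sum_distrib_left)
  also have "\<dots> = (\<Sum>(p, \<beta>)\<in>Sigma ?P ?B. ?term p \<beta>)"
    by (rule sum.Sigma) (auto intro: finite_permutations finite_PiE fin_choices)
  also note sum_entry_choices_eq_sum_linear_subgraphs
  finally show ?thesis .
qed

theorem det_one_minus_arc_matrix_cycle_families:
  fixes src tgt :: "'a \<Rightarrow> 'e::finite" and w :: "'a \<Rightarrow> 'r::comm_ring_1"
  assumes "finite Ar"
  shows "det (mat 1 - arc_matrix src tgt Ar w)
       = 1 + (\<Sum>C\<in>cycle_families src tgt Ar. (-1) ^ card C * (\<Prod>S\<in>C. \<Prod>a\<in>S. w a))"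
proof -
  let ?g = "\<lambda>D. of_int (sign (subgraph_perm src tgt D)) * (-1) ^ card D * (\<Prod>a\<in>D. w a) :: 'r"
  have "linear_subgraphs src tgt Ar \<subseteq> Pow Ar" by (auto simp: linear_subgraphs_def)
  then have "finite (linear_subgraphs src tgt Ar)" using assms finite_subset by blast
  moreover have "{} \<in> linear_subgraphs src tgt Ar" by (simp add: linear_subgraphs_def)
  ultimately have "det (mat 1 - arc_matrix src tgt Ar w)
      = ?g {} + (\<Sum>D\<in>linear_subgraphs src tgt Ar - {{}}. ?g D)"
    unfolding det_one_minus_arc_matrix[OF assms] by (rule sum.remove)
  also have "subgraph_perm src tgt {} = id" by (auto simp: subgraph_perm_def)
  then have "?g {} = 1" by simp
  also note sum_cycle_families_eq_sum_linear_subgraphs[OF assms, symmetric]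
  finally show ?thesis .
qed

lemma grp_elt_add: "grp_elt (a + b) = grp_elt a * grp_elt b"
  by (simp add: grp_elt_def mult_single)

lemma grp_elt_zero: "grp_elt 0 = 1"
  by (simp add: grp_elt_def)

lemma grp_elt_sum: "grp_elt (sum f A) = (\<Prod>x\<in>A. grp_elt (f x))"
  by (induct A rule: infinite_finite_induct) (simp_all add: grp_elt_zero grp_elt_add)

lemma finite_flow_arcs: "finite (flow_arcs tedge side veer :: ('t::finite \<times> nat) set)"
  by (rule finite_subset[of _ "UNIV \<times> {..4}"]) (auto simp: flow_arcs_def opp_sides_def)

lemma flow_arcs_from_bottom:
  assumes "inj bedge"
  shows "{a \<in> flow_arcs tedge side veer. arc_src bedge a = bedge t \<and> arc_tgt tedge side a = u}
       = (if tedge t = u then {(t, 4)} else {})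
         \<union> Pair t ` {k \<in> opp_sides tedge side veer t. side t k = u}"
  using assms by (auto simp: flow_arcs_def arc_src_def arc_tgt_def opp_sides_def inj_eq)

lemma flow_adj_bottom_entry:
  assumes "inj bedge"
  shows "flow_adj bedge tedge side veer htop hside $ bedge t $ u
       = (if u = tedge t then grp_elt (htop t) else 0)
         + (\<Sum>k\<in>opp_sides tedge side veer t. if u = side t k then grp_elt (hside t k) else 0)"
proof -
  let ?K = "{k \<in> opp_sides tedge side veer t. side t k = u}"
  have fin: "finite (opp_sides tedge side veer t)" by (simp add: opp_sides_def)
  have "flow_adj bedge tedge side veer htop hside $ bedge t $ u
      = (\<Sum>a\<in>(if tedge t = u then {(t, 4)} else {}). grp_elt (arc_label htop hside a))
        + (\<Sum>a\<in>Pair t ` ?K. grp_elt (arc_label htop hside a))"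
    unfolding flow_adj_def vec_lambda_beta flow_arcs_from_bottom[OF assms] using fin
    by (intro sum.union_disjoint) (auto simp: opp_sides_def)
  also have "(\<Sum>a\<in>Pair t ` ?K. grp_elt (arc_label htop hside a)) = (\<Sum>k\<in>?K. grp_elt (hside t k))"
    by (subst sum.reindex) (auto simp: arc_label_def inj_on_def opp_sides_def intro: sum.cong)
  also have "\<dots> = (\<Sum>k\<in>opp_sides tedge side veer t. if u = side t k then grp_elt (hside t k) else 0)"
    using sum.inter_filter[OF fin] by (simp add: eq_commute)
  finally show ?thesis by (auto simp: arc_label_def)
qed

lemma veering_matrix_eq_transpose:
  assumes "bij bedge"
  shows "veering_matrix bedge tedge side veer htop hside
       = transpose (mat 1 - flow_adj bedge tedge side veer htop hside)"
proof -
  have "veering_matrix bedge tedge side veer htop hside $ u $ b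
      = (mat 1 - flow_adj bedge tedge side veer htop hside) $ b $ u" for u b
  proof -
    obtain t where b: "b = bedge t" using assms by (metis bij_pointE)
    have "veering_matrix bedge tedge side veer htop hside $ u $ b
        = (if u = bedge t then 1 else 0) - ((if u = tedge t then grp_elt (htop t) else 0)
           + (\<Sum>k\<in>opp_sides tedge side veer t. if u = side t k then grp_elt (hside t k) else 0))"
      using assms by (simp add: veering_matrix_def b bij_is_inj diff_diff_eq)
    also have "\<dots> = (mat 1 - flow_adj bedge tedge side veer htop hside) $ b $ u"
      by (simp add: b mat_def flow_adj_bottom_entry[OF bij_is_inj[OF assms]] eq_commute[of u])
    finally show ?thesis .
  qed
  then show ?thesis by (simp add: vec_eq_iff transpose_def)
qed

theorem mainTheorem6:
  fixes bedge tedge :: "'t::finite \<Rightarrow> 'e::finite"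
    and side :: "'t \<Rightarrow> nat \<Rightarrow> 'e"
    and veer :: "'e \<Rightarrow> bool"
    and htop :: "'t \<Rightarrow> 'g::ab_group_add"
    and hside :: "'t \<Rightarrow> nat \<Rightarrow> 'g"
  assumes "veering_data bedge tedge side veer"
  shows "veering_poly bedge tedge side veer htop hside
           = det (mat 1 - flow_adj bedge tedge side veer htop hside)
       \<and> veering_poly bedge tedge side veer htop hside
           = 1 + (\<Sum>C\<in>cycle_collections bedge tedge side veer.
                    (-1) ^ card C * cycle_class htop hside C)"
proof -
  have "bij bedge" using assms by (simp add: veering_data_def)
  then have poly: "veering_poly bedge tedge side veer htop hside
      = det (mat 1 - flow_adj bedge tedge side veer htop hside)"
    by (simp add: veering_poly_def veering_matrix_eq_transpose det_transpose)
  have "flow_adj bedge tedge side veer htop hside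
      = arc_matrix (arc_src bedge) (arc_tgt tedge side) (flow_arcs tedge side veer)
          (\<lambda>a. grp_elt (arc_label htop hside a))"
    by (simp add: flow_adj_def arc_matrix_def)
  moreover have "cycle_collections bedge tedge side veer
      = cycle_families (arc_src bedge) (arc_tgt tedge side) (flow_arcs tedge side veer)"
    by (simp add: cycle_collections_def cycle_families_def vertex_disjoint_def
        simple_cycle_def is_simple_cycle_def)
  moreover have "cycle_class htop hside C = (\<Prod>S\<in>C. \<Prod>a\<in>S. grp_elt (arc_label htop hside a))" for C
    by (simp add: cycle_class_def grp_elt_sum)
  ultimately show ?thesis
    using poly det_one_minus_arc_matrix_cycle_families[OF finite_flow_arcs] by simp
qed

end
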